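(* Assume $\zeta_{\tilde u}=\zeta_u$ and $\mu\ge4$ (even). Then $\alpha_{\mathrm I}$ first-order stochastically dominates $Y_{\tilde u}$: $F_{\alpha_{\mathrm I}}(y)\le F_{Y_{\tilde u}}(y)$ for all $y\in\mathbb R$, with strict inequality for some $y$. (For $\mu=2$, $\alpha_{\mathrm I}$ and $Y_{\tilde u}$ have the same distribution.)
   Context: Setup: Let $W\ge 1$ be an integer and $\mu\ge 2$ an even integer, set $K=\mu W+1$. Let $\psi_u,\psi_{\tilde u}$ be independent uniform on $(0,2\pi)$ and $\zeta_u,\zeta_{\tilde u}>0$. For $k=1,\dots,K$ let $h_{u,k}=\zeta_u^{1/2}e^{j(\psi_u+2\pi(k-1)/\mu)}$ and $h_{\tilde u,k}=\zeta_{\tilde u}^{1/2}e^{j(\psi_{\tilde u}+2\pi(k-1)/\mu)}$, $j=\sqrt{-1}$. Let $\mathcal K_1=\{k\in\{2,\dots,K\}:\operatorname{Re}(h_{u,k})>0\}$, $\alpha_{\mathrm I}=\big(\sum_{k\in\mathcal K_1}\operatorname{Re}(h_{u,k})\big)^2$, $Y_{\tilde u}=\big(\sum_{k\in\mathcal K_1}\operatorname{Re}(h_{\tilde u,k})\big)^2$. $F_X$ denotes the CDF of $X$. *)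

theory Defs
  imports "HOL-Probability.Probability"
begin

definition chan :: "real \<Rightarrow> real \<Rightarrow> nat \<Rightarrow> nat \<Rightarrow> complex" where
  "chan zeta psi mu k = complex_of_real (sqrt zeta) * cis (psi + 2 * pi * (real k - 1) / real mu)"

definition Kone :: "nat \<Rightarrow> nat \<Rightarrow> real \<Rightarrow> real \<Rightarrow> nat set" where
  "Kone W mu zeta_u psi_u = {k \<in> {2 .. mu * W + 1}. Re (chan zeta_u psi_u mu k) > 0}"

definition alphaI :: "nat \<Rightarrow> nat \<Rightarrow> real \<Rightarrow> real \<Rightarrow> real" where
  "alphaI W mu zeta_u psi_u = (\<Sum>k\<in>Kone W mu zeta_u psi_u. Re (chan zeta_u psi_u mu k))\<^sup>2"

definition Ytil :: "nat \<Rightarrow> nat \<Rightarrow> real \<Rightarrow> real \<Rightarrow> real \<Rightarrow> real \<Rightarrow> real" where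
  "Ytil W mu zeta_u zeta_t psi_u psi_t =
     (\<Sum>k\<in>Kone W mu zeta_u psi_u. Re (chan zeta_t psi_t mu k))\<^sup>2"

text \<open>Joint law of (psi_u, psi_tilde_u): independent, each uniform on (0, 2 pi).\<close>
definition phase_space :: "(real \<times> real) measure" where
  "phase_space = uniform_measure lborel {0<..<2*pi} \<Otimes>\<^sub>M uniform_measure lborel {0<..<2*pi}"

definition cdf_ps :: "(real \<times> real \<Rightarrow> real) \<Rightarrow> real \<Rightarrow> real" where
  "cdf_ps X y = measure phase_space {\<omega> \<in> space phase_space. X \<omega> \<le> y}"

end

(*
  Write c_k(p) = cos (p + 2 pi (k - 1) / mu) and let S(p, t) be the sum of c_k(t) over the
  indices k in {2..mu W + 1} with c_k(p) > 0, so that alpha_I = zeta S(psi_u, psi_u)^2 and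
  Y = zeta S(psi_u, psi_tilde)^2.  For even mu the cyclic index shift by mu/2 negates every c_k,
  whence |S(p, t)| <= S(t, t); as psi_u and psi_tilde have the same law, this gives the weak
  dominance.  For mu >= 3 some phase lies within pi/mu of a multiple of 2 pi, so S(p, p) >= 1/2
  and F_alpha vanishes at zeta/8.  Near p = pi/(2 mu) no c_k vanishes, so the selected index set
  is locally constant, while S(p, .) changes sign on [pi/2, 3 pi/2]; by continuity this yields a
  box of positive measure on which Y <= zeta/8.  For mu = 2, S(p, t) = W sgn (cos p) cos t, so
  Y is almost surely alpha_I evaluated at psi_tilde.
*)

theory Submission
  imports Defs
begin

definition phase_cos :: "nat \<Rightarrow> real \<Rightarrow> nat \<Rightarrow> real" where
  "phase_cos mu p k = cos (p + 2 * pi * (real k - 1) / real mu)"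

definition selected :: "nat \<Rightarrow> nat \<Rightarrow> real \<Rightarrow> nat set" where
  "selected W mu p = {k \<in> {2..mu * W + 1}. 0 < phase_cos mu p k}"

definition selected_cos_sum :: "nat \<Rightarrow> nat \<Rightarrow> real \<Rightarrow> real \<Rightarrow> real" where
  "selected_cos_sum W mu p t = (\<Sum>k\<in>selected W mu p. phase_cos mu t k)"

lemma Re_chan: "Re (chan z p mu k) = sqrt z * phase_cos mu p k"
  by (simp add: chan_def phase_cos_def)

lemma Kone_eq_selected: "0 < z \<Longrightarrow> Kone W mu z p = selected W mu p"
  by (auto simp: Kone_def selected_def Re_chan zero_less_mult_iff)

lemma alphaI_eq: "0 < z \<Longrightarrow> alphaI W mu z p = z * (selected_cos_sum W mu p p)\<^sup>2"
  by (simp add: alphaI_def Kone_eq_selected Re_chan selected_cos_sum_def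
      sum_distrib_left[symmetric] power_mult_distrib)

lemma Ytil_eq: "0 < z \<Longrightarrow> Ytil W mu z z p t = z * (selected_cos_sum W mu p t)\<^sup>2"
  by (simp add: Ytil_def Kone_eq_selected Re_chan selected_cos_sum_def
      sum_distrib_left[symmetric] power_mult_distrib)

lemma selected_cos_sum_altdef:
  "selected_cos_sum W mu p t =
     (\<Sum>k\<in>{2..mu * W + 1}. if 0 < phase_cos mu p k then phase_cos mu t k else 0)"
  unfolding selected_cos_sum_def selected_def by (rule sum.inter_filter) simp

lemma borel_measurable_selected_cos_sum [measurable (raw)]:
  assumes "f \<in> borel_measurable M" "g \<in> borel_measurable M"
  shows "(\<lambda>x. selected_cos_sum W mu (f x) (g x)) \<in> borel_measurable M"
  unfolding selected_cos_sum_altdef phase_cos_def using assms by measurable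

lemma abs_cos_diff_le: "\<bar>cos a - cos b\<bar> \<le> \<bar>a - b :: real\<bar>"
proof -
  have "\<bar>cos a - cos b\<bar> = 2 * \<bar>sin ((a + b) / 2)\<bar> * \<bar>sin ((b - a) / 2)\<bar>"
    by (simp add: cos_diff_cos abs_mult)
  also have "\<dots> \<le> 2 * 1 * \<bar>(b - a) / 2\<bar>"
    by (intro mult_mono abs_sin_x_le_abs_x) auto
  finally show ?thesis by simp
qed

lemma abs_phase_cos_diff_le: "\<bar>phase_cos mu t k - phase_cos mu s k\<bar> \<le> \<bar>t - s\<bar>"
  using abs_cos_diff_le[of "t + 2 * pi * (real k - 1) / real mu" "s + 2 * pi * (real k - 1) / real mu"]
  by (simp add: phase_cos_def)

lemma phase_cos_add_pi: "phase_cos mu (t + pi) k = - phase_cos mu t k"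
proof -
  have "t + pi + 2 * pi * (real k - 1) / real mu = (t + 2 * pi * (real k - 1) / real mu) + pi"
    by simp
  then show ?thesis unfolding phase_cos_def by (simp only: cos_periodic_pi)
qed

definition half_turn :: "nat \<Rightarrow> nat \<Rightarrow> nat \<Rightarrow> nat" where
  "half_turn W mu k =
     (if k + mu div 2 \<le> mu * W + 1 then k + mu div 2 else k + mu div 2 - mu * W)"

lemma half_turn_in:
  assumes "k \<in> {2..mu * W + 1}"
  shows "half_turn W mu k \<in> {2..mu * W + 1}"
proof -
  have "1 \<le> W" using assms by (cases W) auto
  then have "mu div 2 \<le> mu * W" by (metis div_le_dividend le_trans mult_le_mono2 mult_1_right)
  then show ?thesis using assms by (auto simp: half_turn_def)
qed

lemma inj_on_half_turn: "inj_on (half_turn W mu) {2..mu * W + 1}"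
  unfolding inj_on_def half_turn_def by auto

lemma phase_cos_half_turn:
  assumes "even mu" "k \<in> {2..mu * W + 1}"
  shows "phase_cos mu t (half_turn W mu k) = - phase_cos mu t k"
proof -
  obtain m where m: "mu = 2 * m" using assms(1) by blast
  have "0 < m" using assms(2) m by (cases m) auto
  define a where "a = t + 2 * pi * (real k - 1) / real mu + pi"
  have "phase_cos mu t (half_turn W mu k) = cos a \<or>
        phase_cos mu t (half_turn W mu k) = cos (a - 2 * pi * real W)"
    using \<open>0 < m\<close> by (cases "k + m \<le> mu * W + 1")
      (simp_all add: phase_cos_def half_turn_def m a_def field_simps)
  moreover have "cos (a - 2 * pi * real W) = cos a"
    using cos_int_2pin[of "int W"] sin_int_2pin[of "int W"] by (simp add: cos_diff)
  ultimately show ?thesis by (auto simp: a_def phase_cos_def)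
qed

lemma abs_selected_cos_sum_le:
  assumes "even mu"
  shows "\<bar>selected_cos_sum W mu p t\<bar> \<le> selected_cos_sum W mu t t"
proof -
  let ?I = "{2..mu * W + 1}"
  have diag: "selected_cos_sum W mu t t = (\<Sum>k\<in>?I. max (phase_cos mu t k) 0)"
    unfolding selected_cos_sum_altdef by (rule sum.cong) auto
  have upper: "sum (phase_cos mu t) A \<le> selected_cos_sum W mu t t" if "A \<subseteq> ?I" for A
  proof -
    have "sum (phase_cos mu t) A \<le> (\<Sum>k\<in>A. max (phase_cos mu t k) 0)"
      by (intro sum_mono) auto
    also have "\<dots> \<le> (\<Sum>k\<in>?I. max (phase_cos mu t k) 0)"
      by (rule sum_mono2) (use that in auto)
    finally show ?thesis unfolding diag .
  qed
  have "selected_cos_sum W mu p t \<le> selected_cos_sum W mu t t"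
    unfolding selected_cos_sum_def[of W mu p t] by (rule upper) (auto simp: selected_def)
  moreover have "- selected_cos_sum W mu p t = sum (phase_cos mu t) (half_turn W mu ` selected W mu p)"
  proof -
    have "inj_on (half_turn W mu) (selected W mu p)"
      by (rule inj_on_subset[OF inj_on_half_turn]) (auto simp: selected_def)
    then have "sum (phase_cos mu t) (half_turn W mu ` selected W mu p)
        = (\<Sum>k\<in>selected W mu p. phase_cos mu t (half_turn W mu k))"
      by (simp add: sum.reindex)
    also have "\<dots> = - selected_cos_sum W mu p t"
      unfolding selected_cos_sum_def sum_negf[symmetric]
      by (rule sum.cong) (auto simp: selected_def phase_cos_half_turn assms)
    finally show ?thesis by simp
  qed
  moreover have "- selected_cos_sum W mu p t \<le> selected_cos_sum W mu t t"
    unfolding calculation(2) by (rule upper) (use half_turn_in in \<open>auto simp: selected_def\<close>)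
  ultimately show ?thesis by linarith
qed

lemma exists_phase_near_2pi_multiple:
  assumes "1 \<le> W" "0 < mu"
  obtains k q where "k \<in> {2..mu * W + 1}"
    and "\<bar>p + 2 * pi * (real k - 1) / real mu - 2 * pi * real_of_int q\<bar> \<le> pi / real mu"
proof -
  define j where "j = round (p * real mu / (2 * pi))"
  \<comment> \<open>\<open>k - 1\<close> is the representative of \<open>-j\<close> modulo \<open>mu\<close> in \<open>{1..mu}\<close>\<close>
  define m where "m = int mu - j mod int mu"
  have "0 \<le> j mod int mu" "j mod int mu < int mu" using assms(2) by simp_all
  then have m: "1 \<le> m" "m \<le> int mu" by (auto simp: m_def)
  have mj: "m + j = int mu * (j div int mu + 1)"
    using div_mult_mod_eq[of j "int mu"] by (simp add: m_def algebra_simps)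
  define k where "k = nat m + 1"
  have "nat m \<le> mu * W" using m assms(1) mult_le_mono2[of 1 W mu] by linarith
  then have kI: "k \<in> {2..mu * W + 1}" using m by (auto simp: k_def)
  have angle: "p + 2 * pi * (real k - 1) / real mu - 2 * pi * real_of_int (j div int mu + 1)
      = 2 * pi / real mu * (p * real mu / (2 * pi) - real_of_int j)"
  proof -
    have rm: "real_of_int m = real mu * real_of_int (j div int mu + 1) - real_of_int j"
      using arg_cong[OF mj, of real_of_int] by simp
    have rk: "real k - 1 = real_of_int m" using m by (simp add: k_def)
    show ?thesis unfolding rk rm using assms(2) by (simp add: field_simps)
  qed
  have bound: "2 * pi / real mu * \<bar>p * real mu / (2 * pi) - real_of_int j\<bar> \<le> 2 * pi / real mu * (1 / 2)"
    unfolding j_def using of_int_round_abs_le[of "p * real mu / (2 * pi)"]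
    by (intro mult_left_mono) (auto simp: abs_minus_commute)
  have "\<bar>p + 2 * pi * (real k - 1) / real mu - 2 * pi * real_of_int (j div int mu + 1)\<bar>
      \<le> pi / real mu"
    unfolding angle abs_mult using bound by simp
  with kI show ?thesis by (rule that)
qed

lemma selected_cos_sum_diag_ge_half:
  assumes "1 \<le> W" "3 \<le> mu"
  shows "1 / 2 \<le> selected_cos_sum W mu p p"
proof -
  obtain k q where k: "k \<in> {2..mu * W + 1}"
    and near: "\<bar>p + 2 * pi * (real k - 1) / real mu - 2 * pi * real_of_int q\<bar> \<le> pi / real mu"
    using exists_phase_near_2pi_multiple assms by (metis less_le_trans zero_less_numeral)
  have "pi / real mu \<le> pi / 3" using assms(2) by (intro divide_left_mono) auto
  then have "\<bar>p + 2 * pi * (real k - 1) / real mu - 2 * pi * real_of_int q\<bar> \<le> pi / 3"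
    using near by linarith
  then have "cos (pi / 3) \<le> cos \<bar>p + 2 * pi * (real k - 1) / real mu - 2 * pi * real_of_int q\<bar>"
    by (intro cos_monotone_0_pi_le) auto
  also have "\<dots> = phase_cos mu p k"
    unfolding cos_abs_real phase_cos_def cos_diff
    by (simp add: cos_int_2pin[unfolded mult.assoc])
  finally have half: "1 / 2 \<le> phase_cos mu p k" by (simp add: cos_60)
  then have "k \<in> selected W mu p" using k by (simp add: selected_def)
  then have "phase_cos mu p k \<le> selected_cos_sum W mu p p"
    unfolding selected_cos_sum_def by (rule member_le_sum) (auto simp: selected_def)
  then show ?thesis using half by linarith
qed

lemma phase_cos_offset_ne_zero:
  assumes "even mu" "0 < mu"
  shows "phase_cos mu (pi / (2 * real mu)) k \<noteq> 0"
proof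
  assume "phase_cos mu (pi / (2 * real mu)) k = 0"
  then obtain i where "odd i"
    and i: "pi / (2 * real mu) + 2 * pi * (real k - 1) / real mu = real_of_int i * (pi / 2)"
    unfolding phase_cos_def cos_zero_iff_int by blast
  have "pi * (4 * real k - 3) = pi * (real_of_int i * real mu)"
    using i assms(2) by (simp add: field_simps)
  then have "real_of_int (4 * int k - 3) = real_of_int (i * int mu)" by simp
  then have "4 * int k - 3 = i * int mu" by linarith
  then have "even (4 * int k - 3)" using assms(1) by simp
  then show False by presburger
qed

lemma selected_locally_constant:
  assumes "\<forall>k\<in>{2..mu * W + 1}. phase_cos mu p0 k \<noteq> 0"
  obtains e where "0 < e" "\<And>p. \<bar>p - p0\<bar> < e \<Longrightarrow> selected W mu p = selected W mu p0"
proof -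
  have sign_stable: "\<forall>\<^sub>F p in nhds p0. (0 < phase_cos mu p k) = (0 < phase_cos mu p0 k)"
    if "k \<in> {2..mu * W + 1}" for k
  proof -
    have lim: "((\<lambda>p. phase_cos mu p k) \<longlongrightarrow> phase_cos mu p0 k) (nhds p0)"
      unfolding phase_cos_def by (intro tendsto_intros filterlim_ident)
    show ?thesis
    proof (cases "0 < phase_cos mu p0 k")
      case True
      then show ?thesis using order_tendstoD(1)[OF lim True] by (simp add: eventually_mono)
    next
      case False
      then have "phase_cos mu p0 k < 0" using assms that by force
      then show ?thesis using order_tendstoD(2)[OF lim, of 0] False by (auto elim: eventually_mono)
    qed
  qed
  have "\<forall>\<^sub>F p in nhds p0. \<forall>k\<in>{2..mu * W + 1}. (0 < phase_cos mu p k) = (0 < phase_cos mu p0 k)"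
    by (rule eventually_ball_finite) (use sign_stable in auto)
  then obtain e where "0 < e"
    and e: "\<And>p. dist p p0 < e \<Longrightarrow> \<forall>k\<in>{2..mu * W + 1}. (0 < phase_cos mu p k) = (0 < phase_cos mu p0 k)"
    unfolding eventually_nhds_metric by blast
  show ?thesis
  proof (rule that[OF \<open>0 < e\<close>])
    fix p assume "\<bar>p - p0\<bar> < e"
    then show "selected W mu p = selected W mu p0"
      using e[of p] by (auto simp: dist_real_def selected_def)
  qed
qed

lemma selected_cos_sum_add_pi: "selected_cos_sum W mu p (t + pi) = - selected_cos_sum W mu p t"
  by (simp add: selected_cos_sum_def phase_cos_add_pi sum_negf)

lemma continuous_on_selected_cos_sum: "continuous_on A (selected_cos_sum W mu p)"
  unfolding selected_cos_sum_def phase_cos_def by (intro continuous_intros)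

lemma selected_cos_sum_has_zero:
  obtains t0 where "pi / 2 \<le> t0" "t0 \<le> 3 * pi / 2" "selected_cos_sum W mu p t0 = 0"
proof -
  let ?f = "selected_cos_sum W mu p"
  have opposite: "?f (3 * pi / 2) = - ?f (pi / 2)"
    using selected_cos_sum_add_pi[of W mu p "pi / 2"] by simp
  have le: "pi / 2 \<le> 3 * pi / 2" by simp
  show ?thesis
  proof (cases "?f (pi / 2) \<le> 0")
    case True
    then show ?thesis
      using IVT'[of ?f "pi / 2" 0 "3 * pi / 2", OF _ _ le continuous_on_selected_cos_sum]
        opposite that by auto
  next
    case False
    then show ?thesis
      using IVT2'[of ?f "3 * pi / 2" 0 "pi / 2", OF _ _ le continuous_on_selected_cos_sum]
        opposite that by auto
  qed
qed

lemma selected_cos_sum_lipschitz: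
  "\<bar>selected_cos_sum W mu p t - selected_cos_sum W mu p s\<bar> \<le> real (mu * W) * \<bar>t - s\<bar>"
proof -
  let ?S = "selected W mu p"
  have "\<bar>selected_cos_sum W mu p t - selected_cos_sum W mu p s\<bar>
      = \<bar>\<Sum>k\<in>?S. phase_cos mu t k - phase_cos mu s k\<bar>"
    by (simp add: selected_cos_sum_def sum_subtractf)
  also have "\<dots> \<le> (\<Sum>k\<in>?S. \<bar>t - s\<bar>)"
    by (rule order_trans[OF sum_abs sum_mono]) (rule abs_phase_cos_diff_le)
  also have "\<dots> = real (card ?S) * \<bar>t - s\<bar>" by simp
  also have "\<dots> \<le> real (mu * W) * \<bar>t - s\<bar>"
  proof -
    have "card ?S \<le> card {2..mu * W + 1}" by (intro card_mono) (auto simp: selected_def)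
    also have "card {2..mu * W + 1} = mu * W" by simp
    finally have "real (card ?S) \<le> real (mu * W)" by (simp only: of_nat_le_iff)
    then show ?thesis by (rule mult_right_mono) simp
  qed
  finally show ?thesis .
qed

lemma selected_cos_sum_small_on_box:
  assumes "even mu" "0 < mu" "0 < \<epsilon>"
  obtains a b c d where "0 \<le> a" "a < b" "b \<le> 2 * pi" "0 \<le> c" "c < d" "d \<le> 2 * pi"
    and "\<And>p t. p \<in> {a<..<b} \<Longrightarrow> t \<in> {c<..<d} \<Longrightarrow> \<bar>selected_cos_sum W mu p t\<bar> \<le> \<epsilon>"
proof -
  define p0 where "p0 = pi / (2 * real mu)"
  obtain e where "0 < e" and e: "\<And>p. \<bar>p - p0\<bar> < e \<Longrightarrow> selected W mu p = selected W mu p0"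
    using selected_locally_constant phase_cos_offset_ne_zero[OF assms(1,2)] unfolding p0_def
    by metis
  obtain t0 where t0: "pi / 2 \<le> t0" "t0 \<le> 3 * pi / 2" "selected_cos_sum W mu p0 t0 = 0"
    using selected_cos_sum_has_zero by blast
  define r where "r = min e p0"
  define N where "N = real (mu * W)"
  define \<eta> where "\<eta> = min (\<epsilon> / (N + 1)) 1"
  have "0 < p0" "p0 \<le> pi / 2" using assms(2) by (auto simp: p0_def field_simps)
  then have r: "0 < r" "r \<le> p0" using \<open>0 < e\<close> by (auto simp: r_def)
  have "0 \<le> N" by (simp add: N_def)
  then have \<eta>: "0 < \<eta>" "\<eta> \<le> 1" using assms(3) by (simp_all add: \<eta>_def)
  show ?thesis
  proof (rule that[of "p0 - r" "p0 + r" "t0 - \<eta>" "t0 + \<eta>"])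
    show "0 \<le> p0 - r" "p0 - r < p0 + r" "p0 + r \<le> 2 * pi" using r \<open>p0 \<le> pi / 2\<close> by auto
    show "0 \<le> t0 - \<eta>" "t0 - \<eta> < t0 + \<eta>" "t0 + \<eta> \<le> 2 * pi" using t0 \<eta> pi_gt3 by auto
  next
    fix p t assume "p \<in> {p0 - r<..<p0 + r}" "t \<in> {t0 - \<eta><..<t0 + \<eta>}"
    then have p: "\<bar>p - p0\<bar> < e" and t: "\<bar>t - t0\<bar> < \<eta>" by (auto simp: r_def)
    have "\<bar>selected_cos_sum W mu p t\<bar> = \<bar>selected_cos_sum W mu p0 t - selected_cos_sum W mu p0 t0\<bar>"
      using e[OF p] t0(3) by (simp add: selected_cos_sum_def)
    also have "\<dots> \<le> N * \<bar>t - t0\<bar>" unfolding N_def by (rule selected_cos_sum_lipschitz)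
    also have "\<dots> \<le> N * (\<epsilon> / (N + 1))"
      using t \<open>0 \<le> N\<close> by (intro mult_left_mono) (auto simp: \<eta>_def)
    also have "\<dots> \<le> \<epsilon>" using assms(3) \<open>0 \<le> N\<close> by (simp add: field_simps)
    finally show "\<bar>selected_cos_sum W mu p t\<bar> \<le> \<epsilon>" .
  qed
qed

lemma phase_cos_two_Suc: "phase_cos 2 p (Suc k) = (-1) ^ k * cos p"
  by (simp add: phase_cos_def cos_add)

lemma selected_cos_sum_two: "selected_cos_sum W 2 p t = real W * sgn (cos p) * cos t"
proof (induction W)
  case 0
  then show ?case by (simp add: selected_cos_sum_def selected_def)
next
  case (Suc W)
  define f where "f k = (if 0 < phase_cos 2 p k then phase_cos 2 t k else 0)" for k
  have sum_f: "selected_cos_sum n 2 p t = sum f {2..2 * n + 1}" for n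
    unfolding selected_cos_sum_altdef f_def by simp
  have "{2..2 * Suc W + 1} = insert (Suc (Suc (2 * W + 1))) (insert (Suc (2 * W + 1)) {2..2 * W + 1})"
    by auto
  then have "sum f {2..2 * Suc W + 1} = f (Suc (2 * W + 2)) + f (Suc (2 * W + 1)) + sum f {2..2 * W + 1}"
    by (simp add: eval_nat_numeral)
  also have "f (Suc (2 * W + 2)) + f (Suc (2 * W + 1)) = sgn (cos p) * cos t"
    by (simp add: f_def phase_cos_two_Suc sgn_if)
  finally show ?case using Suc.IH unfolding sum_f by (simp add: algebra_simps)
qed

abbreviation uniform_phase :: "real measure" where
  "uniform_phase \<equiv> uniform_measure lborel {0<..<2 * pi}"

lemma prob_space_uniform_phase: "prob_space uniform_phase"
  by (rule prob_space_uniform_measure) auto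

lemma prob_space_phase_space: "prob_space phase_space"
  unfolding phase_space_def by (intro prob_space_pair prob_space_uniform_phase)

lemma finite_measure_phase_space: "finite_measure phase_space"
  using prob_space_phase_space by (rule prob_space.axioms)

lemma space_phase_space [simp]: "space phase_space = UNIV"
  by (simp add: phase_space_def space_pair_measure)

lemma sets_phase_space [measurable_cong]: "sets phase_space = sets (borel \<Otimes>\<^sub>M borel)"
  unfolding phase_space_def by (intro sets_pair_measure_cong) auto

lemma measure_uniform_phase_Ioo:
  assumes "0 \<le> a" "a \<le> b" "b \<le> 2 * pi"
  shows "measure uniform_phase {a<..<b} = (b - a) / (2 * pi)"
proof -
  have "{0<..<2 * pi} \<inter> {a<..<b} = {a<..<b}" using assms by auto
  then show ?thesis using assms by simp
qed

lemma measure_phase_space_Times: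
  assumes "A \<in> sets borel" "B \<in> sets borel"
  shows "measure phase_space (A \<times> B) = measure uniform_phase A * measure uniform_phase B"
proof -
  interpret U: prob_space uniform_phase by (rule prob_space_uniform_phase)
  show ?thesis
    using assms unfolding phase_space_def measure_def
    by (simp add: U.emeasure_pair_measure_Times enn2real_mult)
qed

lemma AE_phase_space_fst:
  assumes "AE p in uniform_phase. P p"
  shows "AE \<omega> in phase_space. P (fst \<omega>)"
proof -
  have "distr phase_space uniform_phase fst = uniform_phase"
    unfolding phase_space_def by (rule prob_space.distr_pair_fst[OF prob_space_uniform_phase])
  moreover have "fst \<in> measurable phase_space uniform_phase"
    unfolding phase_space_def by (rule measurable_fst)
  ultimately show ?thesis using assms by (metis AE_distrD)
qed

lemma AE_uniform_phase_cos_ne_zero: "AE p in uniform_phase. cos p \<noteq> 0"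
proof (rule AE_uniform_measureI)
  have "{p. cos p = 0} = range (\<lambda>i::int. real_of_int i * pi + pi / 2)"
    by (auto simp: cos_zero_iff_int2)
  then have "countable {p. cos p = (0::real)}" by simp
  then show "AE p in lborel. p \<in> {0<..<2 * pi} \<longrightarrow> cos p \<noteq> 0"
    by (auto dest!: countable_imp_null_set_lborel AE_not_in)
qed simp

lemma sublevel_in_sets_phase_space:
  fixes X :: "real \<times> real \<Rightarrow> real"
  assumes [measurable]: "X \<in> borel_measurable phase_space"
  shows "{\<omega>. X \<omega> \<le> y} \<in> sets phase_space"
proof -
  have "{\<omega> \<in> space phase_space. X \<omega> \<le> y} \<in> sets phase_space" by measurable
  then show ?thesis by simp
qed

lemma cdf_ps_fst_eq_snd:
  fixes f :: "real \<Rightarrow> real"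
  assumes [measurable]: "f \<in> borel_measurable borel"
  shows "cdf_ps (\<lambda>\<omega>. f (fst \<omega>)) y = cdf_ps (\<lambda>\<omega>. f (snd \<omega>)) y"
proof -
  have "{p \<in> space borel. f p \<le> y} \<in> sets borel" by measurable
  then have A: "{p. f p \<le> y} \<in> sets borel" by simp
  have U: "measure uniform_phase UNIV = 1"
    using prob_space.prob_space[OF prob_space_uniform_phase] by simp
  have "cdf_ps (\<lambda>\<omega>. f (fst \<omega>)) y = measure phase_space ({p. f p \<le> y} \<times> UNIV)"
    unfolding cdf_ps_def by (rule arg_cong[where f = "measure phase_space"]) auto
  also have "\<dots> = measure phase_space (UNIV \<times> {p. f p \<le> y})"
    using A U by (simp add: measure_phase_space_Times)
  also have "\<dots> = cdf_ps (\<lambda>\<omega>. f (snd \<omega>)) y"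
    unfolding cdf_ps_def by (rule arg_cong[where f = "measure phase_space"]) auto
  finally show ?thesis .
qed

lemma cdf_ps_antimono:
  assumes [measurable]: "X \<in> borel_measurable phase_space" and "\<And>\<omega>. X \<omega> \<le> Y \<omega>"
  shows "cdf_ps Y y \<le> cdf_ps X y"
  unfolding cdf_ps_def
  by (rule finite_measure.finite_measure_mono[OF finite_measure_phase_space])
    (use sublevel_in_sets_phase_space[OF assms(1)] in \<open>auto intro: order_trans[OF assms(2)]\<close>)

lemma cdf_ps_cong_AE:
  assumes [measurable]: "X \<in> borel_measurable phase_space" "Y \<in> borel_measurable phase_space"
    and "AE \<omega> in phase_space. X \<omega> = Y \<omega>"
  shows "cdf_ps X y = cdf_ps Y y"
  unfolding cdf_ps_def
  by (rule finite_measure.finite_measure_eq_AE[OF finite_measure_phase_space])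
    (use assms(3) sublevel_in_sets_phase_space[OF assms(1)] sublevel_in_sets_phase_space[OF assms(2)]
      in auto)

lemma cdf_ps_pos_on_box:
  assumes [measurable]: "X \<in> borel_measurable phase_space"
    and "0 \<le> a" "a < b" "b \<le> 2 * pi" "0 \<le> c" "c < d" "d \<le> 2 * pi"
    and "\<And>p t. p \<in> {a<..<b} \<Longrightarrow> t \<in> {c<..<d} \<Longrightarrow> X (p, t) \<le> y"
  shows "0 < cdf_ps X y"
proof -
  have "0 < (b - a) / (2 * pi) * ((d - c) / (2 * pi))" using assms(3,6) by simp
  also have "\<dots> = measure phase_space ({a<..<b} \<times> {c<..<d})"
    using assms(2-7) by (simp add: measure_phase_space_Times measure_uniform_phase_Ioo)
  also have "\<dots> \<le> cdf_ps X y"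
    unfolding cdf_ps_def
    by (rule finite_measure.finite_measure_mono[OF finite_measure_phase_space])
      (use assms(8) sublevel_in_sets_phase_space[OF assms(1)] in auto)
  finally show ?thesis .
qed

lemma borel_measurable_alphaI:
  assumes "0 < z"
  shows "alphaI W mu z \<in> borel_measurable borel"
proof -
  have "alphaI W mu z = (\<lambda>p. z * (selected_cos_sum W mu p p)\<^sup>2)"
    using alphaI_eq[OF assms] by auto
  then show ?thesis by simp
qed

lemma borel_measurable_Ytil:
  assumes "0 < z"
  shows "(\<lambda>\<omega>. Ytil W mu z z (fst \<omega>) (snd \<omega>)) \<in> borel_measurable phase_space"
proof -
  have "(\<lambda>\<omega>. Ytil W mu z z (fst \<omega>) (snd \<omega>))
      = (\<lambda>\<omega>. z * (selected_cos_sum W mu (fst \<omega>) (snd \<omega>))\<^sup>2)"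
    using Ytil_eq[OF assms] by auto
  then show ?thesis by simp
qed

lemma cdf_alphaI_le_cdf_Ytil:
  assumes "even mu" "0 < z"
  shows "cdf_ps (\<lambda>\<omega>. alphaI W mu z (fst \<omega>)) y \<le> cdf_ps (\<lambda>\<omega>. Ytil W mu z z (fst \<omega>) (snd \<omega>)) y"
proof -
  note [measurable] = borel_measurable_alphaI[OF assms(2)]
  have "cdf_ps (\<lambda>\<omega>. alphaI W mu z (fst \<omega>)) y = cdf_ps (\<lambda>\<omega>. alphaI W mu z (snd \<omega>)) y"
    by (rule cdf_ps_fst_eq_snd) measurable
  also have "\<dots> \<le> cdf_ps (\<lambda>\<omega>. Ytil W mu z z (fst \<omega>) (snd \<omega>)) y"
  proof (rule cdf_ps_antimono[OF borel_measurable_Ytil[OF assms(2)]])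
    fix \<omega> :: "real \<times> real"
    obtain p t where \<omega>: "\<omega> = (p, t)" by fastforce
    have "\<bar>selected_cos_sum W mu p t\<bar> \<le> \<bar>selected_cos_sum W mu t t\<bar>"
      using abs_selected_cos_sum_le[OF assms(1)] by (metis abs_ge_zero order_trans abs_of_nonneg)
    then have "(selected_cos_sum W mu p t)\<^sup>2 \<le> (selected_cos_sum W mu t t)\<^sup>2"
      by (simp add: abs_le_square_iff)
    then show "Ytil W mu z z (fst \<omega>) (snd \<omega>) \<le> alphaI W mu z (snd \<omega>)"
      using assms(2) by (simp add: \<omega> Ytil_eq alphaI_eq)
  qed
  finally show ?thesis .
qed

lemma cdf_alphaI_lt_cdf_Ytil:
  assumes "1 \<le> W" "even mu" "4 \<le> mu" "0 < z"
  shows "cdf_ps (\<lambda>\<omega>. alphaI W mu z (fst \<omega>)) (z / 8)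
       < cdf_ps (\<lambda>\<omega>. Ytil W mu z z (fst \<omega>) (snd \<omega>)) (z / 8)"
proof -
  have "z / 8 < alphaI W mu z p" for p
  proof -
    have "(1 / 2)\<^sup>2 \<le> (selected_cos_sum W mu p p)\<^sup>2"
      using selected_cos_sum_diag_ge_half[of W mu p] assms(1,3) by (intro power_mono) auto
    then have "z * (1 / 2)\<^sup>2 \<le> alphaI W mu z p"
      using assms(4) by (simp add: alphaI_eq)
    then show ?thesis using assms(4) by (simp add: power2_eq_square)
  qed
  then have "{\<omega>. alphaI W mu z (fst \<omega>) \<le> z / 8} = {}" by (auto simp: not_le[symmetric])
  then have "cdf_ps (\<lambda>\<omega>. alphaI W mu z (fst \<omega>)) (z / 8) = 0"
    by (simp add: cdf_ps_def)
  moreover have "0 < cdf_ps (\<lambda>\<omega>. Ytil W mu z z (fst \<omega>) (snd \<omega>)) (z / 8)"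
  proof -
    have "0 < mu" using assms(3) by simp
    obtain a b c d where box: "0 \<le> a" "a < b" "b \<le> 2 * pi" "0 \<le> c" "c < d" "d \<le> 2 * pi"
      and small: "\<And>p t. p \<in> {a<..<b} \<Longrightarrow> t \<in> {c<..<d} \<Longrightarrow> \<bar>selected_cos_sum W mu p t\<bar> \<le> 1 / 4"
      by (rule selected_cos_sum_small_on_box[OF assms(2) \<open>0 < mu\<close>, of "1 / 4" W]) auto
    show ?thesis
    proof (rule cdf_ps_pos_on_box[OF borel_measurable_Ytil[OF assms(4)] box])
      fix p t assume "p \<in> {a<..<b}" "t \<in> {c<..<d}"
      then have "\<bar>selected_cos_sum W mu p t\<bar>\<^sup>2 \<le> (1 / 4)\<^sup>2"
        using small by (intro power_mono) simp_all
      then have "z * (selected_cos_sum W mu p t)\<^sup>2 \<le> z * (1 / 4)\<^sup>2"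
        using assms(4) by (intro mult_left_mono) simp_all
      then show "Ytil W mu z z (fst (p, t)) (snd (p, t)) \<le> z / 8"
        using assms(4) by (simp add: Ytil_eq power2_eq_square)
    qed
  qed
  ultimately show ?thesis by simp
qed

lemma cdf_alphaI_eq_cdf_Ytil_two:
  assumes "0 < z"
  shows "cdf_ps (\<lambda>\<omega>. alphaI W 2 z (fst \<omega>)) y = cdf_ps (\<lambda>\<omega>. Ytil W 2 z z (fst \<omega>) (snd \<omega>)) y"
proof -
  note [measurable] = borel_measurable_alphaI[OF assms]
  have "cdf_ps (\<lambda>\<omega>. alphaI W 2 z (fst \<omega>)) y = cdf_ps (\<lambda>\<omega>. alphaI W 2 z (snd \<omega>)) y"
    by (rule cdf_ps_fst_eq_snd) measurable
  also have "\<dots> = cdf_ps (\<lambda>\<omega>. Ytil W 2 z z (fst \<omega>) (snd \<omega>)) y"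
  proof (rule cdf_ps_cong_AE)
    show "(\<lambda>\<omega>. Ytil W 2 z z (fst \<omega>) (snd \<omega>)) \<in> borel_measurable phase_space"
      by (rule borel_measurable_Ytil[OF assms])
    show "AE \<omega> in phase_space. alphaI W 2 z (snd \<omega>) = Ytil W 2 z z (fst \<omega>) (snd \<omega>)"
      using AE_phase_space_fst[OF AE_uniform_phase_cos_ne_zero]
      by eventually_elim
        (auto simp: assms alphaI_eq Ytil_eq selected_cos_sum_two power_mult_distrib sgn_if)
  qed measurable
  finally show ?thesis .
qed

theorem corollary7:
  fixes W mu :: nat and zeta_u zeta_t :: real
  assumes "W \<ge> 1" and "even mu" and "mu \<ge> 2"
    and "zeta_u > 0" and "zeta_t = zeta_u"
  shows "(mu \<ge> 4 \<longrightarrow>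
           (\<forall>y::real. cdf_ps (\<lambda>\<omega>. alphaI W mu zeta_u (fst \<omega>)) y
                       \<le> cdf_ps (\<lambda>\<omega>. Ytil W mu zeta_u zeta_t (fst \<omega>) (snd \<omega>)) y)
         \<and> (\<exists>y::real. cdf_ps (\<lambda>\<omega>. alphaI W mu zeta_u (fst \<omega>)) y
                       < cdf_ps (\<lambda>\<omega>. Ytil W mu zeta_u zeta_t (fst \<omega>) (snd \<omega>)) y))
       \<and> (mu = 2 \<longrightarrow>
           (\<forall>y::real. cdf_ps (\<lambda>\<omega>. alphaI W mu zeta_u (fst \<omega>)) y
                       = cdf_ps (\<lambda>\<omega>. Ytil W mu zeta_u zeta_t (fst \<omega>) (snd \<omega>)) y))"
  unfolding assms(5)
proof (intro conjI impI allI)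
  fix y
  show "cdf_ps (\<lambda>\<omega>. alphaI W mu zeta_u (fst \<omega>)) y
      \<le> cdf_ps (\<lambda>\<omega>. Ytil W mu zeta_u zeta_u (fst \<omega>) (snd \<omega>)) y"
    by (rule cdf_alphaI_le_cdf_Ytil[OF assms(2,4)])
next
  assume "4 \<le> mu"
  with cdf_alphaI_lt_cdf_Ytil[OF assms(1,2) _ assms(4)]
  show "\<exists>y. cdf_ps (\<lambda>\<omega>. alphaI W mu zeta_u (fst \<omega>)) y
      < cdf_ps (\<lambda>\<omega>. Ytil W mu zeta_u zeta_u (fst \<omega>) (snd \<omega>)) y" by blast
next
  fix y
  assume "mu = 2"
  with cdf_alphaI_eq_cdf_Ytil_two[OF assms(4)]
  show "cdf_ps (\<lambda>\<omega>. alphaI W mu zeta_u (fst \<omega>)) y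
      = cdf_ps (\<lambda>\<omega>. Ytil W mu zeta_u zeta_u (fst \<omega>) (snd \<omega>)) y" by simp
qed

end
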